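(* For $n\ge1$, $q\in\mathbb{C}$ and indeterminates $z_1,\dots,z_n$, $$\sum_{\sigma\in\mathbb{S}_n}\mathrm{sgn}(\sigma)\prod_{1\le i<j\le n}\big(z_{\sigma(j)}-qz_{\sigma(i)}-(1-q)z_{\sigma(i)}z_{\sigma(j)}\big)=[n]_q!\prod_{1\le i<j\le n}(z_j-z_i).$$
   Context: $[k]_q=1+q+\cdots+q^{k-1}$ and $[n]_q!=[1]_q[2]_q\cdots[n]_q$. *)

theory Defs
  imports Complex_Main "HOL-Combinatorics.Combinatorics"
begin

definition qint :: "complex \<Rightarrow> nat \<Rightarrow> complex" where
  "qint q k = (\<Sum>i<k. q ^ i)"

definition qfact :: "complex \<Rightarrow> nat \<Rightarrow> complex" where
  "qfact q n = (\<Prod>k=1..n. qint q k)"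

end

theory Submission
  imports Defs
begin

text \<open>
  Both sides are polynomials in z, so after perturbing z_i to z_i + t i and letting t tend to 0
  we may assume the z_i distinct and different from 1. Then each factor equals
  h(\<sigma> i, \<sigma> j) (z_\<sigma>j - z_\<sigma>i) with h(m, k) = (z_k - q z_m - (1 - q) z_m z_k) / (z_k - z_m), and as the
  Vandermonde product changes by sgn \<sigma> under \<sigma>, the left side is the Vandermonde product times
  \<Sum>_\<sigma> \<Prod>_i<j h(\<sigma> i, \<sigma> j). In the coordinates x = z / (1 - z) we have
  h(m, k) = (x_k - q x_m) / (x_k - x_m), and a partial fraction induction gives
  \<Sum>_k\<in>S \<Prod>_m\<in>S-{k} h(m, k) = [|S|]_q for every index set S. Sorting the permutations by the
  value of their last point turns this into \<Sum>_\<sigma> \<Prod>_i<j h(\<sigma> i, \<sigma> j) = [n]_q!.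
\<close>

definition vandermonde :: "nat \<Rightarrow> (nat \<Rightarrow> 'a::comm_ring_1) \<Rightarrow> 'a" where
  "vandermonde n w = (\<Prod>i=1..n. \<Prod>j=i+1..n. w j - w i)"

definition increasing_pairs :: "nat \<Rightarrow> (nat \<times> nat) set" where
  "increasing_pairs n = Sigma {1..n} (\<lambda>i. {i+1..n})"

definition inversion_sign :: "nat \<Rightarrow> (nat \<Rightarrow> nat) \<Rightarrow> int" where
  "inversion_sign n s = (\<Prod>(i, j)\<in>increasing_pairs n. if s i < s j then 1 else -1)"

lemma finite_increasing_pairs [simp]: "finite (increasing_pairs n)"
  by (simp add: increasing_pairs_def)

lemma mem_increasing_pairs: "(i, j) \<in> increasing_pairs n \<longleftrightarrow> 1 \<le> i \<and> i < j \<and> j \<le> n"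
  by (auto simp: increasing_pairs_def)

lemma vandermonde_eq_prod_increasing_pairs:
  "vandermonde n w = (\<Prod>(i, j)\<in>increasing_pairs n. w j - w i)"
  unfolding vandermonde_def increasing_pairs_def by (simp add: prod.Sigma)

lemma bij_betw_sort_pair_permutes:
  assumes "s permutes {1..n}"
  shows "bij_betw (\<lambda>(i, j). (min (s i) (s j), max (s i) (s j))) (increasing_pairs n) (increasing_pairs n)"
proof -
  define \<phi> where "\<phi> = (\<lambda>(i, j). (min (s i) (s j), max (s i) (s j)))"
  have inj: "inj s" using assms permutes_inj by blast
  have into: "\<phi> ` increasing_pairs n \<subseteq> increasing_pairs n"
  proof (rule image_subsetI)
    fix p assume "p \<in> increasing_pairs n"
    then obtain i j where p: "p = (i, j)" "1 \<le> i" "i < j" "j \<le> n"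
      by (cases p) (auto simp: mem_increasing_pairs)
    then have "s i \<in> {1..n}" "s j \<in> {1..n}" "s i \<noteq> s j"
      using permutes_in_image[OF assms] inj by (simp_all add: inj_eq)
    then show "\<phi> p \<in> increasing_pairs n"
      by (auto simp: p \<phi>_def mem_increasing_pairs min_def max_def)
  qed
  have inj_on: "inj_on \<phi> (increasing_pairs n)"
  proof (rule inj_onI, clarify)
    fix i j i' j' assume "(i, j) \<in> increasing_pairs n" "(i', j') \<in> increasing_pairs n"
      and "\<phi> (i, j) = \<phi> (i', j')"
    moreover have "{min a b, max a b} = {a, b}" for a b :: nat by (auto simp: min_def max_def)
    ultimately have "i < j" "i' < j'" and "s ` {i, j} = s ` {i', j'}"
      by (auto simp: \<phi>_def mem_increasing_pairs)
    moreover from this(3) have "{i, j} = {i', j'}" by (simp only: inj_image_eq_iff[OF inj])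
    ultimately show "i = i' \<and> j = j'" by (auto simp: doubleton_eq_iff)
  qed
  have "bij_betw \<phi> (increasing_pairs n) (increasing_pairs n)"
    using endo_inj_surj[OF finite_increasing_pairs into inj_on] inj_on by (simp add: bij_betw_def)
  then show ?thesis unfolding \<phi>_def .
qed

lemma vandermonde_permute_inversion_sign:
  assumes "s permutes {1..n}"
  shows "vandermonde n (\<lambda>i. w (s i)) = of_int (inversion_sign n s) * vandermonde n w"
proof -
  define \<phi> where "\<phi> = (\<lambda>(i, j). (min (s i) (s j), max (s i) (s j)))"
  define d where "d = (\<lambda>(i, j). w j - w i)"
  define e where "e = (\<lambda>(i, j). if s i < s j then 1 else - 1 :: int)"
  have "d (s i, s j) = of_int (e (i, j)) * d (\<phi> (i, j))"
    if "(i, j) \<in> increasing_pairs n" for i j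
  proof -
    have "s i \<noteq> s j"
      using that permutes_inj[OF assms] by (simp add: mem_increasing_pairs inj_eq)
    then show ?thesis by (cases "s i < s j") (simp_all add: \<phi>_def d_def e_def)
  qed
  then have "vandermonde n (\<lambda>i. w (s i)) = (\<Prod>p\<in>increasing_pairs n. of_int (e p) * d (\<phi> p))"
    unfolding vandermonde_eq_prod_increasing_pairs
    by (intro prod.cong) (auto simp: d_def)
  also have "\<dots> = of_int (inversion_sign n s) * (\<Prod>p\<in>increasing_pairs n. d (\<phi> p))"
    by (simp add: inversion_sign_def e_def prod.distrib of_int_prod)
  also have "(\<Prod>p\<in>increasing_pairs n. d (\<phi> p)) = vandermonde n w"
    unfolding vandermonde_eq_prod_increasing_pairs d_def
    using prod.reindex_bij_betw[OF bij_betw_sort_pair_permutes[OF assms]] by (simp add: \<phi>_def)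
  finally show ?thesis .
qed

lemma vandermonde_int_nonzero: "vandermonde n int \<noteq> 0"
  unfolding vandermonde_def by (auto simp: prod_zero_iff)

text \<open>Multiplicativity is read off from \<open>vandermonde_permute_inversion_sign\<close> at the injective weight \<open>int\<close>.\<close>

lemma inversion_sign_compose:
  assumes "s permutes {1..n}" "r permutes {1..n}"
  shows "inversion_sign n (s \<circ> r) = inversion_sign n s * inversion_sign n r"
proof -
  have "inversion_sign n (s \<circ> r) * vandermonde n int = vandermonde n (\<lambda>i. int (s (r i)))"
    using vandermonde_permute_inversion_sign[OF permutes_compose[OF assms(2,1)], of int] by simp
  also have "\<dots> = inversion_sign n r * vandermonde n (\<lambda>i. int (s i))"
    using vandermonde_permute_inversion_sign[OF assms(2), of "\<lambda>i. int (s i)"] by simp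
  also have "\<dots> = inversion_sign n r * (inversion_sign n s * vandermonde n int)"
    using vandermonde_permute_inversion_sign[OF assms(1), of int] by simp
  finally show ?thesis using vandermonde_int_nonzero by simp
qed

lemma inversion_sign_id [simp]: "inversion_sign n id = 1"
  unfolding inversion_sign_def by (rule prod.neutral) (auto simp: mem_increasing_pairs)

lemma inversion_sign_transpose_Suc:
  assumes "1 \<le> a" "Suc a \<le> n"
  shows "inversion_sign n (Transposition.transpose a (Suc a)) = -1"
proof -
  have "inversion_sign n (Transposition.transpose a (Suc a))
      = (\<Prod>p\<in>increasing_pairs n. if p = (a, Suc a) then -1 else 1)"
    unfolding inversion_sign_def
    by (rule prod.cong) (auto simp: mem_increasing_pairs transpose_def split: if_splits)
  also have "\<dots> = -1" using assms by (simp add: mem_increasing_pairs)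
  finally show ?thesis .
qed

lemma inversion_sign_transpose:
  assumes "a \<in> {1..n}" "b \<in> {1..n}" "a \<noteq> b"
  shows "inversion_sign n (Transposition.transpose a b) = -1"
proof -
  have ordered: "b \<le> n \<Longrightarrow> inversion_sign n (Transposition.transpose a b) = -1"
    if "1 \<le> a" "Suc a \<le> b" for a b
    using that(2)
  proof (induction b rule: nat_induct_at_least)
    case base then show ?case using that(1) by (simp add: inversion_sign_transpose_Suc)
  next
    case (Suc b)
    let ?t = "Transposition.transpose b (Suc b)"
    have "Transposition.transpose a (Suc b) = ?t \<circ> Transposition.transpose a b \<circ> ?t"
      using Suc.hyps by (auto simp: fun_eq_iff transpose_def)
    moreover have "?t permutes {1..n}" "Transposition.transpose a b permutes {1..n}"
      using Suc that(1) by (auto intro: permutes_swap_id)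
    ultimately have "inversion_sign n (Transposition.transpose a (Suc b))
        = inversion_sign n ?t * inversion_sign n (Transposition.transpose a b) * inversion_sign n ?t"
      by (simp only: inversion_sign_compose permutes_compose)
    then show ?case
      using Suc that(1) inversion_sign_transpose_Suc[of b n] by simp
  qed
  show ?thesis
    using ordered[of a b] ordered[of b a] assms
    by (metis Suc_le_eq atLeastAtMost_iff linorder_neqE_nat transpose_commute)
qed

lemma inversion_sign_eq_sign:
  assumes "s permutes {1..n}"
  shows "inversion_sign n s = sign s"
  using assms finite_atLeastAtMost
proof (induction rule: permutes_induct)
  case id
  then show ?case by (simp add: id_def[symmetric])
next
  case (swap a b p)
  then have t: "Transposition.transpose a b permutes {1..n}"
    by (auto intro: permutes_swap_id)
  have "inversion_sign n (Transposition.transpose a b \<circ> p)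
      = inversion_sign n (Transposition.transpose a b) * inversion_sign n p"
    using t swap by (intro inversion_sign_compose)
  also have "\<dots> = sign (Transposition.transpose a b) * sign p"
    using swap by (simp add: inversion_sign_transpose sign_swap_id)
  also have "\<dots> = sign (Transposition.transpose a b \<circ> p)"
    using swap t by (intro sign_compose[symmetric] permutes_imp_permutation[of "{1..n}"]) auto
  finally show ?case .
qed

lemma vandermonde_permute_sign:
  assumes "s permutes {1..n}"
  shows "vandermonde n (\<lambda>i. w (s i)) = of_int (sign s) * vandermonde n w"
  using vandermonde_permute_inversion_sign[OF assms] inversion_sign_eq_sign[OF assms] by simp

lemma sum_prod_remove_reindex:
  assumes "inj \<tau>"
  shows "(\<Sum>k\<in>S. \<Prod>m\<in>S-{k}. h (\<tau> m) (\<tau> k)) = (\<Sum>k\<in>\<tau> ` S. \<Prod>m\<in>\<tau> ` S - {k}. h m k)"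
proof -
  have "\<tau> ` S - {\<tau> k} = \<tau> ` (S - {k})" for k
    by (simp add: image_set_diff assms)
  then have "(\<Prod>m\<in>S-{k}. h (\<tau> m) (\<tau> k)) = (\<Prod>m\<in>\<tau> ` S - {\<tau> k}. h m (\<tau> k))" for k
    by (simp add: prod.reindex inj_on_subset[OF assms])
  then show ?thesis
    using assms by (simp add: sum.reindex inj_on_subset[OF assms])
qed

lemma prod_increasing_pairs_Suc:
  "(\<Prod>i=1..Suc n. \<Prod>j=i+1..Suc n. g i j) = (\<Prod>i=1..n. \<Prod>j=i+1..n. g i j) * (\<Prod>i=1..n. g i (Suc n))"
proof -
  have "(\<Prod>i=1..Suc n. \<Prod>j=i+1..Suc n. g i j) = (\<Prod>i=1..n. (\<Prod>j=i+1..n. g i j) * g i (Suc n))"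
    by (simp add: prod.cl_ivl_Suc)
  then show ?thesis by (simp add: prod.distrib)
qed

lemma prod_permutes_except_last:
  assumes "\<pi> permutes {1..Suc n}"
  shows "(\<Prod>i=1..n. f (\<pi> i)) = (\<Prod>m\<in>{1..Suc n} - {\<pi> (Suc n)}. f m)"
proof -
  have "\<pi> ` {1..n} = \<pi> ` ({1..Suc n} - {Suc n})" by auto
  also have "\<dots> = {1..Suc n} - {\<pi> (Suc n)}"
    using permutes_image[OF assms] by (simp add: image_set_diff permutes_inj[OF assms])
  finally show ?thesis
    using prod.reindex[OF inj_on_subset[OF permutes_inj[OF assms]], of "{1..n}" f] by simp
qed

text \<open>
  Induction on n, splitting the permutations of {1..n+1} by the value b of n+1: the factors
  involving n+1 contribute \<Prod>_m\<noteq>b h m b, and the hypothesis on subsets is stable under relabelling.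
\<close>

lemma sum_permutes_prod_increasing_pairs:
  fixes h :: "nat \<Rightarrow> nat \<Rightarrow> 'a::comm_semiring_1" and c :: "nat \<Rightarrow> 'a"
  assumes "\<And>S. S \<subseteq> {1..n} \<Longrightarrow> (\<Sum>k\<in>S. \<Prod>m\<in>S-{k}. h m k) = c (card S)"
  shows "(\<Sum>\<sigma> | \<sigma> permutes {1..n}. \<Prod>i=1..n. \<Prod>j=i+1..n. h (\<sigma> i) (\<sigma> j)) = (\<Prod>k=1..n. c k)"
  using assms
proof (induction n arbitrary: h)
  case 0
  then show ?case by simp
next
  case (Suc n)
  let ?F = "\<lambda>\<sigma>. \<Prod>i=1..Suc n. \<Prod>j=i+1..Suc n. h (\<sigma> i) (\<sigma> j)"
  have "{1..Suc n} = insert (Suc n) {1..n}" by auto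
  then have "(\<Sum>\<sigma> | \<sigma> permutes {1..Suc n}. ?F \<sigma>)
      = (\<Sum>b\<in>{1..Suc n}. \<Sum>p | p permutes {1..n}. ?F (Transposition.transpose (Suc n) b \<circ> p))"
    by (simp add: sum_over_permutations_insert)
  also have "\<dots> = (\<Sum>b\<in>{1..Suc n}. (\<Prod>k=1..n. c k) * (\<Prod>m\<in>{1..Suc n}-{b}. h m b))"
  proof (rule sum.cong[OF refl])
    fix b assume b: "b \<in> {1..Suc n}"
    define \<tau> where "\<tau> = Transposition.transpose (Suc n) b"
    have \<tau>: "\<tau> permutes {1..Suc n}" unfolding \<tau>_def using b by (intro permutes_swap_id) auto
    have "(\<Sum>k\<in>S. \<Prod>m\<in>S-{k}. h (\<tau> m) (\<tau> k)) = c (card S)" if "S \<subseteq> {1..n}" for S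
    proof -
      have "\<tau> ` S \<subseteq> {1..Suc n}" using that permutes_in_image[OF \<tau>] by auto
      then show ?thesis
        using Suc.prems[of "\<tau> ` S"] permutes_inj[OF \<tau>]
        by (simp add: sum_prod_remove_reindex card_image inj_on_subset)
    qed
    then have IH: "(\<Sum>p | p permutes {1..n}. \<Prod>i=1..n. \<Prod>j=i+1..n. h (\<tau> (p i)) (\<tau> (p j)))
        = (\<Prod>k=1..n. c k)"
      by (rule Suc.IH)
    have "?F (\<tau> \<circ> p) = (\<Prod>i=1..n. \<Prod>j=i+1..n. h (\<tau> (p i)) (\<tau> (p j))) * (\<Prod>m\<in>{1..Suc n}-{b}. h m b)"
      if p: "p permutes {1..n}" for p
    proof -
      have \<tau>p: "\<tau> \<circ> p permutes {1..Suc n}"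
        using permutes_compose[OF permutes_subset[OF p] \<tau>] by auto
      have "(\<tau> \<circ> p) (Suc n) = b" using permutes_not_in[OF p] by (simp add: \<tau>_def)
      with prod_permutes_except_last[OF \<tau>p, of "\<lambda>m. h m b"] show ?thesis
        unfolding prod_increasing_pairs_Suc[of _ n] using permutes_not_in[OF p] by simp
    qed
    then have "(\<Sum>p | p permutes {1..n}. ?F (\<tau> \<circ> p))
        = (\<Sum>p | p permutes {1..n}. (\<Prod>i=1..n. \<Prod>j=i+1..n. h (\<tau> (p i)) (\<tau> (p j)))
            * (\<Prod>m\<in>{1..Suc n}-{b}. h m b))"
      by (intro sum.cong) auto
    also have "\<dots> = (\<Prod>k=1..n. c k) * (\<Prod>m\<in>{1..Suc n}-{b}. h m b)"
      by (simp only: sum_distrib_right[symmetric] IH)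
    finally show "(\<Sum>p | p permutes {1..n}. ?F (Transposition.transpose (Suc n) b \<circ> p))
        = (\<Prod>k=1..n. c k) * (\<Prod>m\<in>{1..Suc n}-{b}. h m b)"
      unfolding \<tau>_def .
  qed
  also have "\<dots> = (\<Prod>k=1..n. c k) * c (Suc n)"
    using Suc.prems[of "{1..Suc n}"] by (simp add: sum_distrib_left[symmetric])
  also have "\<dots> = (\<Prod>k=1..Suc n. c k)" by (simp add: prod.cl_ivl_Suc)
  finally show ?case .
qed

lemma partial_fraction_two:
  fixes y u t q :: "'a::field"
  assumes "y \<noteq> u" "y \<noteq> t" "u \<noteq> t"
  shows "(y - q * u) / (y - u) / (y - t)
      = (1 - q) * u / (u - t) / (y - u) + (t - q * u) / (t - u) / (y - t)"
proof -
  have "y - u \<noteq> 0" "y - t \<noteq> 0" "u - t \<noteq> 0" "t - u \<noteq> 0" using assms by auto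
  then show ?thesis by (simp add: divide_simps) (simp add: algebra_simps)
qed

lemma partial_fraction_recombine:
  fixes u t q P Pu Pt B D r :: "'a::field"
  assumes "u \<noteq> t" "(1 - q) * u * B = r - Pu" "(1 - q) * t * D = r - Pt"
  shows "(1 - q) * t * (Pu / (u - t) + ((1 - q) * u / (u - t) * B + (t - q * u) / (t - u) * D))
     = q * r - Pt * ((t - q * u) / (t - u))"
proof -
  have ne: "u - t \<noteq> 0" "t - u \<noteq> 0" using assms by auto
  have "(1 - q) * t * (Pu / (u - t) + ((1 - q) * u / (u - t) * B + (t - q * u) / (t - u) * D))
     = ((1 - q) * t * Pu + (1 - q) * t * ((1 - q) * u * B)) / (u - t) + (t - q * u) / (t - u) * ((1 - q) * t * D)"
    by (simp add: algebra_simps flip: add_divide_distrib)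
  also have "\<dots> = q * r - Pt * ((t - q * u) / (t - u))"
    unfolding assms(2,3) using ne by (simp add: divide_simps) (simp add: algebra_simps)
  finally show ?thesis .
qed

definition hl_weight :: "(nat \<Rightarrow> 'a::field) \<Rightarrow> 'a \<Rightarrow> nat set \<Rightarrow> nat \<Rightarrow> 'a" where
  "hl_weight x q S k = (\<Prod>m\<in>S-{k}. (x k - q * x m) / (x k - x m))"

definition hl_product :: "(nat \<Rightarrow> 'a::field) \<Rightarrow> 'a \<Rightarrow> nat set \<Rightarrow> 'a \<Rightarrow> 'a" where
  "hl_product x q S t = (\<Prod>m\<in>S. (t - q * x m) / (t - x m))"

lemma hl_weight_insert:
  assumes "finite S" "a \<notin> S" "k \<in> S"
  shows "hl_weight x q (insert a S) k = hl_weight x q S k * ((x k - q * x a) / (x k - x a))"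
proof -
  have "insert a S - {k} = insert a (S - {k})" using assms by auto
  then show ?thesis using assms by (simp add: hl_weight_def mult.commute)
qed

lemma hl_weight_insert_self:
  assumes "a \<notin> S"
  shows "hl_weight x q (insert a S) a = hl_product x q S (x a)"
  using assms by (simp add: hl_weight_def hl_product_def)

text \<open>The partial fraction expansion of \<open>hl_product x q S\<close>, in a form valid also at t = 0.\<close>

lemma sum_hl_weight_div:
  assumes "finite S" "inj_on x S" "t \<notin> x ` S"
  shows "(1 - q) * t * (\<Sum>k\<in>S. hl_weight x q S k / (x k - t)) = q ^ card S - hl_product x q S t"
  using assms
proof (induction S arbitrary: t rule: finite_induct)
  case empty
  then show ?case by (simp add: hl_product_def)
next
  case (insert a S)
  have inj: "inj_on x S" and xa: "x a \<notin> x ` S" and t: "t \<notin> x ` S" "x a \<noteq> t"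
    using insert.prems insert.hyps(2) by auto
  have "hl_weight x q (insert a S) k / (x k - t)
      = (1 - q) * x a / (x a - t) * (hl_weight x q S k / (x k - x a))
        + (t - q * x a) / (t - x a) * (hl_weight x q S k / (x k - t))" if "k \<in> S" for k
  proof -
    have "x k \<noteq> x a" "x k \<noteq> t" using that xa t by (metis image_eqI)+
    have "hl_weight x q (insert a S) k / (x k - t)
        = hl_weight x q S k * ((x k - q * x a) / (x k - x a) / (x k - t))"
      unfolding hl_weight_insert[OF insert.hyps that] by (simp only: times_divide_eq_right)
    also have "\<dots> = hl_weight x q S k
        * ((1 - q) * x a / (x a - t) / (x k - x a) + (t - q * x a) / (t - x a) / (x k - t))"
      by (simp only: partial_fraction_two[OF \<open>x k \<noteq> x a\<close> \<open>x k \<noteq> t\<close> \<open>x a \<noteq> t\<close>])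
    finally show ?thesis by (simp add: algebra_simps)
  qed
  then have sum_eq: "(\<Sum>k\<in>insert a S. hl_weight x q (insert a S) k / (x k - t))
      = hl_product x q S (x a) / (x a - t)
        + ((1 - q) * x a / (x a - t) * (\<Sum>k\<in>S. hl_weight x q S k / (x k - x a))
          + (t - q * x a) / (t - x a) * (\<Sum>k\<in>S. hl_weight x q S k / (x k - t)))"
    using insert.hyps by (simp add: hl_weight_insert_self sum.distrib sum_distrib_left)
  have "(1 - q) * t * (\<Sum>k\<in>insert a S. hl_weight x q (insert a S) k / (x k - t))
      = q * q ^ card S - hl_product x q S t * ((t - q * x a) / (t - x a))"
    unfolding sum_eq by (rule partial_fraction_recombine[OF \<open>x a \<noteq> t\<close> insert.IH[OF inj xa] insert.IH[OF inj t(1)]])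
  also have "\<dots> = q ^ card (insert a S) - hl_product x q (insert a S) t"
    using insert.hyps by (simp add: hl_product_def mult.commute)
  finally show ?case .
qed

lemma sum_hl_weight:
  assumes "finite S" "inj_on x S"
  shows "(\<Sum>k\<in>S. hl_weight x q S k) = (\<Sum>i<card S. q ^ i)"
  using assms
proof (induction S rule: finite_induct)
  case empty
  then show ?case by simp
next
  case (insert a S)
  have inj: "inj_on x S" and xa: "x a \<notin> x ` S" using insert by auto
  have "hl_weight x q (insert a S) k = hl_weight x q S k + (1 - q) * x a * (hl_weight x q S k / (x k - x a))"
    if "k \<in> S" for k
  proof -
    have "x k - x a \<noteq> 0" using that xa by (metis image_eqI right_minus_eq)
    then show ?thesis
      by (simp add: hl_weight_insert[OF insert.hyps that] divide_simps) (simp add: algebra_simps)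
  qed
  then have "(\<Sum>k\<in>insert a S. hl_weight x q (insert a S) k)
      = hl_product x q S (x a) + ((\<Sum>k\<in>S. hl_weight x q S k)
          + (1 - q) * x a * (\<Sum>k\<in>S. hl_weight x q S k / (x k - x a)))"
    using insert.hyps by (simp add: hl_weight_insert_self sum.distrib sum_distrib_left)
  also have "\<dots> = (\<Sum>i<card (insert a S). q ^ i)"
    using insert.IH[OF inj] sum_hl_weight_div[OF insert.hyps(1) inj xa] insert.hyps by simp
  finally show ?case .
qed

lemma deformed_ratio_cayley:
  fixes a b q :: "'a::field"
  assumes "a \<noteq> 1" "b \<noteq> 1" "a \<noteq> b"
  shows "(a - q * b - (1 - q) * b * a) / (a - b)
      = (a / (1 - a) - q * (b / (1 - b))) / (a / (1 - a) - b / (1 - b))"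
proof -
  have "1 - a \<noteq> 0" "1 - b \<noteq> 0" "a - b \<noteq> 0" using assms by auto
  then show ?thesis by (simp add: divide_simps) (simp add: algebra_simps)
qed

lemma sum_prod_deformed_ratio:
  fixes z :: "nat \<Rightarrow> 'a::field"
  assumes "finite S" "inj_on z S" "\<And>m. m \<in> S \<Longrightarrow> z m \<noteq> 1"
  shows "(\<Sum>k\<in>S. \<Prod>m\<in>S-{k}. (z k - q * z m - (1 - q) * z m * z k) / (z k - z m))
      = (\<Sum>i<card S. q ^ i)"
proof -
  define x where "x i = z i / (1 - z i)" for i
  have "inj_on x S"
  proof (rule inj_onI)
    fix a b assume "a \<in> S" "b \<in> S" "x a = x b"
    moreover from this have "1 - z a \<noteq> 0" "1 - z b \<noteq> 0" using assms(3) by auto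
    ultimately have "z a = z b" by (simp add: x_def divide_simps) (simp add: algebra_simps)
    with \<open>a \<in> S\<close> \<open>b \<in> S\<close> show "a = b" using assms(2) by (auto dest: inj_onD)
  qed
  moreover have "(z k - q * z m - (1 - q) * z m * z k) / (z k - z m) = (x k - q * x m) / (x k - x m)"
    if "k \<in> S" "m \<in> S - {k}" for k m
    using that assms(2,3) by (simp add: x_def deformed_ratio_cayley inj_on_eq_iff)
  ultimately show ?thesis
    using sum_hl_weight[OF assms(1)] by (simp add: hl_weight_def)
qed

lemma q_alternant_eq_qfact_vandermonde:
  fixes z :: "nat \<Rightarrow> complex"
  assumes "inj_on z {1..n}" "\<And>i. i \<in> {1..n} \<Longrightarrow> z i \<noteq> 1"
  shows "(\<Sum>\<sigma> | \<sigma> permutes {1..n}. of_int (sign \<sigma>) *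
           (\<Prod>i=1..n. \<Prod>j=i+1..n.
              z (\<sigma> j) - q * z (\<sigma> i) - (1 - q) * z (\<sigma> i) * z (\<sigma> j)))
         = qfact q n * vandermonde n z"
proof -
  define h where "h a b = (z b - q * z a - (1 - q) * z a * z b) / (z b - z a)" for a b
  have summand: "of_int (sign \<sigma>) * (\<Prod>i=1..n. \<Prod>j=i+1..n.
              z (\<sigma> j) - q * z (\<sigma> i) - (1 - q) * z (\<sigma> i) * z (\<sigma> j))
      = (\<Prod>i=1..n. \<Prod>j=i+1..n. h (\<sigma> i) (\<sigma> j)) * vandermonde n z"
    if \<sigma>: "\<sigma> permutes {1..n}" for \<sigma>
  proof -
    have "z (\<sigma> j) \<noteq> z (\<sigma> i)" if "i \<in> {1..n}" "j \<in> {i+1..n}" for i j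
      using that permutes_in_image[OF \<sigma>] permutes_inj[OF \<sigma>] assms(1)
      by (simp add: inj_on_eq_iff inj_eq)
    then have "(\<Prod>i=1..n. \<Prod>j=i+1..n. z (\<sigma> j) - q * z (\<sigma> i) - (1 - q) * z (\<sigma> i) * z (\<sigma> j))
        = (\<Prod>i=1..n. \<Prod>j=i+1..n. h (\<sigma> i) (\<sigma> j)) * vandermonde n (\<lambda>i. z (\<sigma> i))"
      by (simp add: h_def vandermonde_def prod.distrib[symmetric])
    moreover have sign_cancel: "of_int (sign \<sigma>) * (P * (of_int (sign \<sigma>) * V)) = P * V"
      for P V :: complex
    proof -
      have "of_int (sign \<sigma>) * (P * (of_int (sign \<sigma>) * V)) = of_int (sign \<sigma> * sign \<sigma>) * (P * V)"
        by (simp only: of_int_mult mult_ac)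
      then show ?thesis by simp
    qed
    ultimately show ?thesis
      unfolding vandermonde_permute_sign[OF \<sigma>] by (simp only:)
  qed
  have "(\<Sum>k\<in>S. \<Prod>m\<in>S-{k}. h m k) = qint q (card S)" if "S \<subseteq> {1..n}" for S
    using that assms sum_prod_deformed_ratio[of S z q]
    by (simp add: h_def qint_def finite_subset[OF that] inj_on_subset subset_iff)
  then have symmetrized: "(\<Sum>\<sigma> | \<sigma> permutes {1..n}. \<Prod>i=1..n. \<Prod>j=i+1..n. h (\<sigma> i) (\<sigma> j))
      = qfact q n"
    unfolding qfact_def by (rule sum_permutes_prod_increasing_pairs)
  have "(\<Sum>\<sigma> | \<sigma> permutes {1..n}. of_int (sign \<sigma>) *
           (\<Prod>i=1..n. \<Prod>j=i+1..n.
              z (\<sigma> j) - q * z (\<sigma> i) - (1 - q) * z (\<sigma> i) * z (\<sigma> j)))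
      = (\<Sum>\<sigma> | \<sigma> permutes {1..n}. (\<Prod>i=1..n. \<Prod>j=i+1..n. h (\<sigma> i) (\<sigma> j)) * vandermonde n z)"
    by (rule sum.cong[OF refl], rule summand) simp
  also have "\<dots> = qfact q n * vandermonde n z"
    by (simp only: sum_distrib_right[symmetric] symmetrized)
  finally show ?thesis .
qed

lemma isCont_eq_const_off_finite:
  fixes f :: "'a::{perfect_space, t2_space} \<Rightarrow> 'b::t2_space"
  assumes "isCont f a" "finite B" "\<And>t. t \<notin> B \<Longrightarrow> f t = c"
  shows "f a = c"
proof -
  have "eventually (\<lambda>t. \<forall>b\<in>B. t \<noteq> b) (at a)"
    using assms(2) by (intro eventually_ball_finite ballI eventually_neq_at_within)
  then have "eventually (\<lambda>t. f t = c) (at a)"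
    by (rule eventually_mono) (use assms(3) in blast)
  then have "(f \<longlongrightarrow> c) (at a)" by (rule tendsto_eventually)
  with assms(1) show ?thesis unfolding isCont_def by (rule LIM_unique)
qed

lemma cofinitely_generic_shifts:
  fixes z :: "nat \<Rightarrow> complex"
  obtains B where "finite B"
    and "\<And>t. t \<notin> B \<Longrightarrow> inj_on (\<lambda>i. z i + t * of_nat i) {1..n}"
    and "\<And>t i. t \<notin> B \<Longrightarrow> i \<in> {1..n} \<Longrightarrow> z i + t * of_nat i \<noteq> 1"
proof
  let ?B = "(\<lambda>(i, j). (z j - z i) / (of_nat i - of_nat j)) ` ({1..n} \<times> {1..n})
    \<union> (\<lambda>i. (1 - z i) / of_nat i) ` {1..n}"
  show "finite ?B" by simp
  fix t assume t: "t \<notin> ?B"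
  show "inj_on (\<lambda>i. z i + t * of_nat i) {1..n}"
  proof (rule inj_onI, rule ccontr)
    fix i j assume ij: "i \<in> {1..n}" "j \<in> {1..n}" "z i + t * of_nat i = z j + t * of_nat j" "i \<noteq> j"
    then have "(of_nat i - of_nat j :: complex) \<noteq> 0" by simp
    with ij have "t = (z j - z i) / (of_nat i - of_nat j)"
      by (simp add: eq_divide_eq algebra_simps)
    with ij t show False by (auto intro!: image_eqI[of _ _ "(i, j)"])
  qed
  fix i assume i: "i \<in> {1..n}"
  show "z i + t * of_nat i \<noteq> 1"
  proof
    assume "z i + t * of_nat i = 1"
    with i have "t = (1 - z i) / of_nat i" by (simp add: eq_divide_eq algebra_simps)
    with i t show False by blast
  qed
qed

theorem lemma4:
  fixes n :: nat and q :: complex and z :: "nat \<Rightarrow> complex"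
  assumes "n \<ge> 1"
  shows "(\<Sum>\<sigma> | \<sigma> permutes {1..n}. of_int (sign \<sigma>) *
           (\<Prod>i=1..n. \<Prod>j=i+1..n.
              z (\<sigma> j) - q * z (\<sigma> i) - (1 - q) * z (\<sigma> i) * z (\<sigma> j)))
         = qfact q n * (\<Prod>i=1..n. \<Prod>j=i+1..n. z j - z i)"
proof -
  define defect where "defect w = (\<Sum>\<sigma> | \<sigma> permutes {1..n}. of_int (sign \<sigma>) *
           (\<Prod>i=1..n. \<Prod>j=i+1..n.
              w (\<sigma> j) - q * w (\<sigma> i) - (1 - q) * w (\<sigma> i) * w (\<sigma> j)))
      - qfact q n * vandermonde n w" for w
  define shift where "shift t = (\<lambda>i. z i + t * of_nat i)" for t :: complex
  obtain B where "finite B" and generic: "\<And>t. t \<notin> B \<Longrightarrow> inj_on (shift t) {1..n}"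
    "\<And>t i. t \<notin> B \<Longrightarrow> i \<in> {1..n} \<Longrightarrow> shift t i \<noteq> 1"
    unfolding shift_def using cofinitely_generic_shifts[of z n] by blast
  have "isCont (\<lambda>t. defect (shift t)) 0"
    unfolding defect_def shift_def vandermonde_def by (intro continuous_intros)
  moreover have "defect (shift t) = 0" if "t \<notin> B" for t
    using q_alternant_eq_qfact_vandermonde[OF generic[OF that]] by (simp add: defect_def)
  ultimately have "defect (shift 0) = 0"
    by (rule isCont_eq_const_off_finite[OF _ \<open>finite B\<close>])
  then show ?thesis
    by (simp add: defect_def shift_def vandermonde_def)
qed

end
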